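(* Let $G$ be a graph with maximum degree $2$ and $k$ a positive integer. If $G$ has exactly one path component with at least $k-1$ vertices and $0\le s(G,P_k)\le k$, then $G$ has no cycle with more than $k$ vertices, and its unique path component with at least $k-1$ vertices has $s(G,P_k)+k-1$ vertices.
   Context: $P_k$ is the path with $k$ vertices; $s(G,H)$ is the number of vertex subsets $X\subseteq V(G)$ such that $G[X]$ is isomorphic to $H$. *)

theory Defs
  imports Main
begin

definition simple_graph :: "'a set \<Rightarrow> ('a \<Rightarrow> 'a \<Rightarrow> bool) \<Rightarrow> bool" where
  "simple_graph V E \<longleftrightarrow> finite V \<and> (\<forall>u v. E u v \<longrightarrow> u \<in> V \<and> v \<in> V)
     \<and> (\<forall>u v. E u v \<longrightarrow> E v u) \<and> (\<forall>v. \<not> E v v)"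

definition degree :: "'a set \<Rightarrow> ('a \<Rightarrow> 'a \<Rightarrow> bool) \<Rightarrow> 'a \<Rightarrow> nat" where
  "degree V E v = card {u \<in> V. E v u}"

definition max_degree :: "'a set \<Rightarrow> ('a \<Rightarrow> 'a \<Rightarrow> bool) \<Rightarrow> nat" where
  "max_degree V E = Max (degree V E ` V)"

definition induces_path :: "('a \<Rightarrow> 'a \<Rightarrow> bool) \<Rightarrow> 'a set \<Rightarrow> nat \<Rightarrow> bool" where
  "induces_path E X m \<longleftrightarrow> (\<exists>f. bij_betw f {0..<m} X \<and>
     (\<forall>i<m. \<forall>j<m. E (f i) (f j) \<longleftrightarrow> (i + 1 = j \<or> j + 1 = i)))"

definition s_path :: "'a set \<Rightarrow> ('a \<Rightarrow> 'a \<Rightarrow> bool) \<Rightarrow> nat \<Rightarrow> nat" where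
  "s_path V E k = card {X. X \<subseteq> V \<and> induces_path E X k}"

definition component :: "'a set \<Rightarrow> ('a \<Rightarrow> 'a \<Rightarrow> bool) \<Rightarrow> 'a set \<Rightarrow> bool" where
  "component V E C \<longleftrightarrow> (\<exists>u\<in>V. C = {v \<in> V. E\<^sup>*\<^sup>* u v})"

definition path_component :: "'a set \<Rightarrow> ('a \<Rightarrow> 'a \<Rightarrow> bool) \<Rightarrow> 'a set \<Rightarrow> bool" where
  "path_component V E C \<longleftrightarrow> component V E C \<and> induces_path E C (card C)"

definition has_cycle_of_length :: "'a set \<Rightarrow> ('a \<Rightarrow> 'a \<Rightarrow> bool) \<Rightarrow> nat \<Rightarrow> bool" where
  "has_cycle_of_length V E m \<longleftrightarrow> 3 \<le> m \<and> (\<exists>c::nat \<Rightarrow> 'a.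
     inj_on c {0..<m} \<and> c ` {0..<m} \<subseteq> V \<and> (\<forall>i<m. E (c i) (c ((i + 1) mod m))))"

end

theory Submission
  imports Defs
begin

text \<open>If a cycle had m > k vertices, its m arcs of k consecutive vertices would be m distinct induced
  copies of P_k, contradicting s(G,P_k) \<le> k. Every component of a graph of maximum degree 2 is a
  path or a cycle, and no copy of P_k lies in a cycle component, since these have at most k vertices.
  Hence every copy of P_k lies in a path component with at least k vertices, which must be the unique
  path component C with at least k - 1 vertices, and inside C the copies are exactly the
  |C| - k + 1 intervals of k consecutive vertices.\<close>

section \<open>Index arithmetic modulo the length of a cycle\<close>

lemma add_mod_cancel_less:
  fixes i a b m :: nat
  assumes "a < m" "b < m" "(i + a) mod m = (i + b) mod m"
  shows "a = b"
proof -
  have cancel: "a = b" if "a \<le> b" "b < m" "(i + a) mod m = (i + b) mod m" for a b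
  proof -
    have "m dvd (i + b) - (i + a)"
      using that mod_eq_dvd_iff_nat[of "i + a" "i + b" m] by simp
    then have "m dvd b - a" by simp
    moreover have "b - a < m" using that by simp
    ultimately have "b - a = 0" by (metis nat_dvd_not_less neq0_conv)
    then show ?thesis using \<open>a \<le> b\<close> by simp
  qed
  show ?thesis using cancel[of a b] cancel[of b a] assms by (cases "a \<le> b") auto
qed

lemma mod_add_succ: "((i + a) mod m + 1) mod m = (i + (a + 1)) mod m" for i a m :: nat
  by (metis add.assoc mod_add_left_eq)

lemma mod_pred_succ:
  fixes p m :: nat
  assumes "p < m"
  shows "((p + m - 1) mod m + 1) mod m = p"
proof -
  have "((p + m - 1) mod m + 1) mod m = (p + m - 1 + 1) mod m" by (rule mod_add_left_eq)
  also have "p + m - 1 + 1 = p + m" using assms by simp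
  finally show ?thesis using assms by simp
qed

lemma mod_succ_ne_mod_pred:
  fixes p m :: nat
  assumes "p < m" "3 \<le> m"
  shows "(p + 1) mod m \<noteq> (p + m - 1) mod m"
proof
  assume "(p + 1) mod m = (p + m - 1) mod m"
  then have "(p + 1) mod m = (p + (m - 1)) mod m" using assms by simp
  then have "1 = m - 1" using add_mod_cancel_less[of 1 m "m - 1" p] assms by simp
  then show False using assms by simp
qed

section \<open>Induced paths inside a path\<close>

lemma card_induced_path: "induces_path E X k \<Longrightarrow> card X = k"
  unfolding induces_path_def by (auto dest: bij_betw_same_card)

lemma inj_on_unit_steps:
  fixes h :: "nat \<Rightarrow> nat"
  assumes inj: "inj_on h {0..<k}"
    and step: "\<And>j. Suc j < k \<Longrightarrow> h (Suc j) = h j + 1 \<or> h j = h (Suc j) + 1"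
  shows "(\<forall>j<k. h j = h 0 + j) \<or> (\<forall>j<k. h 0 = h j + j)"
proof -
  have "(\<forall>j\<le>n. h j = h 0 + j) \<or> (\<forall>j\<le>n. h 0 = h j + j)" if "n < k" for n
    using that
  proof (induction n)
    case 0
    show ?case by simp
  next
    case (Suc n)
    then have IH: "(\<forall>j\<le>n. h j = h 0 + j) \<or> (\<forall>j\<le>n. h 0 = h j + j)" by simp
    have "Suc n < k" using Suc.prems .
    then have step_n: "h (Suc n) = h n + 1 \<or> h n = h (Suc n) + 1" by (rule step)
    show ?case
    proof (cases n)
      case 0
      then show ?thesis using step_n by (auto simp: le_Suc_eq)
    next
      case (Suc p)
      have no_return: "h (Suc n) \<noteq> h p"
        using inj_onD[OF inj, of "Suc n" p] \<open>Suc n < k\<close> \<open>n = Suc p\<close> by auto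
      from IH show ?thesis
      proof
        assume up: "\<forall>j\<le>n. h j = h 0 + j"
        have "h (Suc n) = h 0 + Suc n"
          using step_n no_return up[rule_format, of n] up[rule_format, of p] \<open>n = Suc p\<close> by auto
        with up show ?thesis by (metis le_Suc_eq)
      next
        assume down: "\<forall>j\<le>n. h 0 = h j + j"
        have "h 0 = h (Suc n) + Suc n"
          using step_n no_return down[rule_format, of n] down[rule_format, of p] \<open>n = Suc p\<close> by auto
        with down show ?thesis by (metis le_Suc_eq)
      qed
    qed
  qed
  then show ?thesis by (cases k) (auto simp: less_Suc_eq_le)
qed

lemma unit_steps_image_interval:
  fixes h :: "nat \<Rightarrow> nat"
  assumes inj: "inj_on h {0..<k}"
    and step: "\<And>j. Suc j < k \<Longrightarrow> h (Suc j) = h j + 1 \<or> h j = h (Suc j) + 1"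
    and h_less: "\<And>j. j < k \<Longrightarrow> h j < L" and "1 \<le> k"
  shows "\<exists>i. i + k \<le> L \<and> h ` {0..<k} = {i..<i + k}"
proof -
  consider "\<forall>j<k. h j = h 0 + j" | "\<forall>j<k. h 0 = h j + j"
    using inj_on_unit_steps[OF inj step] by blast
  then obtain i where i: "i + k \<le> L" and h_in: "\<And>j. j < k \<Longrightarrow> h j \<in> {i..<i + k}"
  proof cases
    case up: 1
    show ?thesis
    proof (rule that)
      have "h (k - 1) = h 0 + (k - 1)" using up[rule_format, of "k - 1"] \<open>1 \<le> k\<close> by simp
      then show "h 0 + k \<le> L" using h_less[of "k - 1"] \<open>1 \<le> k\<close> by simp
      show "h j \<in> {h 0..<h 0 + k}" if "j < k" for j using up[rule_format, OF that] that by simp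
    qed
  next
    case down: 2
    have h0: "h 0 = h (k - 1) + (k - 1)" using down[rule_format, of "k - 1"] \<open>1 \<le> k\<close> by simp
    show ?thesis
    proof (rule that)
      show "h (k - 1) + k \<le> L" using h0 h_less[of 0] \<open>1 \<le> k\<close> by simp
      show "h j \<in> {h (k - 1)..<h (k - 1) + k}" if "j < k" for j
      proof -
        have "j \<le> k - 1" "k - 1 < k" using that by auto
        then show ?thesis
          unfolding atLeastLessThan_iff using down[rule_format, OF that] h0 by linarith
      qed
    qed
  qed
  have "h ` {0..<k} = {i..<i + k}"
    using h_in inj by (intro card_subset_eq) (auto simp: card_image)
  with i show ?thesis by blast
qed

lemma induces_path_interval:
  assumes inj: "inj_on g {0..<L}"
    and edges: "\<And>i j. i < L \<Longrightarrow> j < L \<Longrightarrow> E (g i) (g j) \<longleftrightarrow> (i + 1 = j \<or> j + 1 = i)"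
    and "i + k \<le> L"
  shows "induces_path E (g ` {i..<i + k}) k"
  unfolding induces_path_def
proof (intro exI conjI allI impI)
  have "inj_on (\<lambda>j. g (i + j)) {0..<k}"
  proof (rule inj_onI)
    fix a b assume "a \<in> {0..<k}" "b \<in> {0..<k}" "g (i + a) = g (i + b)"
    then show "a = b" using inj_onD[OF inj] \<open>i + k \<le> L\<close> by fastforce
  qed
  moreover have "(\<lambda>j. g (i + j)) ` {0..<k} = g ` {i..<i + k}"
    using image_image[of g "(+) i" "{0..<k}"] by (simp add: add.commute)
  ultimately show "bij_betw (\<lambda>j. g (i + j)) {0..<k} (g ` {i..<i + k})"
    by (simp add: bij_betw_def)
  fix a b assume "a < k" "b < k"
  then show "E (g (i + a)) (g (i + b)) \<longleftrightarrow> (a + 1 = b \<or> b + 1 = a)"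
    using edges \<open>i + k \<le> L\<close> by auto
qed

text \<open>Read along C, the vertices of an induced copy of P_k inside C form an injective walk with unit
  steps on the indices of C.\<close>
lemma induced_subpath_interval:
  assumes g: "bij_betw g {0..<L} C"
    and edges: "\<And>i j. i < L \<Longrightarrow> j < L \<Longrightarrow> E (g i) (g j) \<longleftrightarrow> (i + 1 = j \<or> j + 1 = i)"
    and X: "induces_path E X k" and "X \<subseteq> C" and "1 \<le> k"
  shows "\<exists>i. i + k \<le> L \<and> X = g ` {i..<i + k}"
proof -
  obtain f where f: "bij_betw f {0..<k} X"
    and f_edges: "\<And>i j. i < k \<Longrightarrow> j < k \<Longrightarrow> E (f i) (f j) \<longleftrightarrow> (i + 1 = j \<or> j + 1 = i)"
    using X unfolding induces_path_def by blast
  define h where "h j = the_inv_into {0..<L} g (f j)" for j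
  have "f j \<in> g ` {0..<L}" if "j < k" for j
    using f g \<open>X \<subseteq> C\<close> that by (auto simp: bij_betw_def)
  moreover have inj_g: "inj_on g {0..<L}" using g by (simp add: bij_betw_def)
  ultimately have h_less: "h j < L" and g_h: "g (h j) = f j" if "j < k" for j
    using that the_inv_into_into[OF inj_g _ subset_refl] f_the_inv_into_f[OF inj_g]
    by (auto simp: h_def)
  have inj_h: "inj_on h {0..<k}"
  proof (rule inj_onI)
    fix a b assume a: "a \<in> {0..<k}" and b: "b \<in> {0..<k}" and "h a = h b"
    then have "f a = f b" using g_h[of a] g_h[of b] by simp
    moreover have "inj_on f {0..<k}" using f by (simp add: bij_betw_def)
    ultimately show "a = b" using a b by (simp add: inj_on_eq_iff)
  qed
  have "h (Suc j) = h j + 1 \<or> h j = h (Suc j) + 1" if "Suc j < k" for j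
    using f_edges[of j "Suc j"] edges[of "h j" "h (Suc j)"] g_h h_less that by auto
  then obtain i where "i + k \<le> L" "h ` {0..<k} = {i..<i + k}"
    using unit_steps_image_interval[OF inj_h _ h_less \<open>1 \<le> k\<close>] by blast
  moreover have "X = g ` h ` {0..<k}"
    using f g_h by (auto simp: bij_betw_def image_image)
  ultimately show ?thesis by auto
qed

lemma s_path_path_component:
  assumes C: "path_component V E C" and "1 \<le> k"
    and inside: "\<And>X. X \<subseteq> V \<Longrightarrow> induces_path E X k \<Longrightarrow> X \<subseteq> C"
  shows "s_path V E k = card C + 1 - k"
proof -
  define L where "L = card C"
  obtain g where g: "bij_betw g {0..<L} C"
    and edges: "\<And>i j. i < L \<Longrightarrow> j < L \<Longrightarrow> E (g i) (g j) \<longleftrightarrow> (i + 1 = j \<or> j + 1 = i)"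
    using C unfolding path_component_def induces_path_def L_def by blast
  have "C \<subseteq> V" using C unfolding path_component_def component_def by auto
  have inj_g: "inj_on g {0..<L}" and g_C: "g ` {0..<L} = C"
    using g by (auto simp: bij_betw_def)
  define window where "window i = g ` {i..<i + k}" for i
  have "{X. X \<subseteq> V \<and> induces_path E X k} = window ` {..<L + 1 - k}"
  proof (intro equalityI subsetI)
    fix X assume "X \<in> {X. X \<subseteq> V \<and> induces_path E X k}"
    then have "X \<subseteq> C" "induces_path E X k" using inside by auto
    then obtain i where "i + k \<le> L" "X = window i"
      using induced_subpath_interval[OF g edges] \<open>1 \<le> k\<close> unfolding window_def by blast
    then show "X \<in> window ` {..<L + 1 - k}" by auto
  next
    fix X assume "X \<in> window ` {..<L + 1 - k}"
    then obtain i where "i < L + 1 - k" and X: "X = window i" by blast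
    then have "i + k \<le> L" by simp
    then have "window i \<subseteq> C" using g_C by (auto simp: window_def)
    then show "X \<in> {X. X \<subseteq> V \<and> induces_path E X k}"
      using X \<open>C \<subseteq> V\<close> induces_path_interval[OF inj_g edges \<open>i + k \<le> L\<close>]
      by (auto simp: window_def)
  qed
  moreover have "inj_on window {..<L + 1 - k}"
  proof (rule inj_onI)
    fix i i' assume "i \<in> {..<L + 1 - k}" "i' \<in> {..<L + 1 - k}" "window i = window i'"
    moreover have "{j..<j + k} \<subseteq> {0..<L}" if "j < L + 1 - k" for j
      using that by auto
    ultimately have "{i..<i + k} = {i'..<i' + k}"
      using inj_on_image_eq_iff[OF inj_g] by (simp add: window_def)
    then show "i = i'" using atLeastLessThan_inj(1)[of i "i + k" i' "i' + k"] \<open>1 \<le> k\<close> by simp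
  qed
  ultimately show ?thesis
    unfolding s_path_def L_def by (simp add: card_image)
qed

section \<open>Graphs of maximum degree at most two\<close>

definition cycle_arc :: "nat \<Rightarrow> (nat \<Rightarrow> 'a) \<Rightarrow> nat \<Rightarrow> nat \<Rightarrow> 'a set" where
  "cycle_arc m c k i = (\<lambda>j. c ((i + j) mod m)) ` {0..<k}"

locale max_degree_le_2 =
  fixes V :: "'a set" and E :: "'a \<Rightarrow> 'a \<Rightarrow> bool"
  assumes simple: "simple_graph V E"
    and degree_le_2: "\<And>v. v \<in> V \<Longrightarrow> degree V E v \<le> 2"
begin

lemma finite_V: "finite V"
  using simple by (simp add: simple_graph_def)

lemma edge_in_V:
  assumes "E u v"
  shows "u \<in> V" "v \<in> V"
  using simple assms by (auto simp: simple_graph_def)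

lemma edge_sym: "E u v \<Longrightarrow> E v u"
  using simple by (simp add: simple_graph_def)

lemma edge_irrefl: "\<not> E v v"
  using simple by (simp add: simple_graph_def)

lemma neighbour_cases:
  assumes "a \<noteq> b" "E v a" "E v b" "E v w"
  shows "w = a \<or> w = b"
proof (rule ccontr)
  assume "\<not> (w = a \<or> w = b)"
  then have "card {a, b, w} = 3" using assms(1) by auto
  moreover have "{a, b, w} \<subseteq> {u \<in> V. E v u}" using assms(2-4) edge_in_V by auto
  moreover have "finite {u \<in> V. E v u}" using finite_V by simp
  ultimately have "3 \<le> degree V E v" unfolding degree_def by (metis card_mono)
  then show False using degree_le_2[OF edge_in_V(1)[OF assms(2)]] by simp
qed

definition is_cycle :: "nat \<Rightarrow> (nat \<Rightarrow> 'a) \<Rightarrow> bool" where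
  "is_cycle m c \<longleftrightarrow> 3 \<le> m \<and> inj_on c {0..<m} \<and> c ` {0..<m} \<subseteq> V
     \<and> (\<forall>i<m. E (c i) (c ((i + 1) mod m)))"

lemma has_cycle_of_length_iff: "has_cycle_of_length V E m \<longleftrightarrow> (\<exists>c. is_cycle m c)"
  by (auto simp: has_cycle_of_length_def is_cycle_def)

lemma cycle_edges:
  assumes "is_cycle m c" "p < m"
  shows "E (c p) (c ((p + 1) mod m))" "E (c p) (c ((p + m - 1) mod m))"
    "c ((p + 1) mod m) \<noteq> c ((p + m - 1) mod m)"
proof -
  have m: "3 \<le> m" and inj: "inj_on c {0..<m}" and succ: "\<forall>i<m. E (c i) (c ((i + 1) mod m))"
    using assms(1) by (auto simp: is_cycle_def)
  show "E (c p) (c ((p + 1) mod m))" using succ assms(2) by simp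
  have "E (c ((p + m - 1) mod m)) (c (((p + m - 1) mod m + 1) mod m))" using succ m by simp
  then have "E (c ((p + m - 1) mod m)) (c p)" by (simp only: mod_pred_succ[OF assms(2)])
  then show "E (c p) (c ((p + m - 1) mod m))" by (rule edge_sym)
  show "c ((p + 1) mod m) \<noteq> c ((p + m - 1) mod m)"
    using mod_succ_ne_mod_pred[OF assms(2) m] inj m by (simp add: inj_on_eq_iff)
qed

lemma cycle_neighbour:
  assumes "is_cycle m c" "p < m" "E (c p) w"
  shows "w = c ((p + 1) mod m) \<or> w = c ((p + m - 1) mod m)"
  using neighbour_cases cycle_edges[OF assms(1,2)] assms(3) by blast

lemma cycle_arc_edge_iff:
  assumes cycle: "is_cycle m c" and "a + 1 < m" "b + 1 < m"
  shows "E (c ((i + a) mod m)) (c ((i + b) mod m)) \<longleftrightarrow> a + 1 = b \<or> b + 1 = a"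
proof -
  have "0 < m" and inj: "inj_on c {0..<m}" using cycle by (auto simp: is_cycle_def)
  have succ: "E (c ((i + j) mod m)) (c ((i + (j + 1)) mod m))" for j
  proof -
    have "(i + j) mod m < m" using \<open>0 < m\<close> by simp
    from cycle_edges(1)[OF cycle this] show ?thesis by (simp only: mod_add_succ)
  qed
  show ?thesis
  proof
    define p where "p = (i + a) mod m"
    have "p < m" using \<open>0 < m\<close> by (simp add: p_def)
    assume "E (c ((i + a) mod m)) (c ((i + b) mod m))"
    then have "c ((i + b) mod m) = c ((p + 1) mod m) \<or> c ((i + b) mod m) = c ((p + m - 1) mod m)"
      using cycle_neighbour[OF cycle \<open>p < m\<close>] by (simp add: p_def)
    then have "(i + b) mod m = (p + 1) mod m \<or> (i + b) mod m = (p + m - 1) mod m"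
      using inj \<open>0 < m\<close> by (simp add: inj_on_eq_iff)
    then show "a + 1 = b \<or> b + 1 = a"
    proof
      assume "(i + b) mod m = (p + 1) mod m"
      then have "(i + (a + 1)) mod m = (i + b) mod m" by (metis mod_add_succ p_def)
      then show ?thesis using add_mod_cancel_less[of "a + 1" m b i] assms(2,3) by simp
    next
      assume "(i + b) mod m = (p + m - 1) mod m"
      then have "((i + b) mod m + 1) mod m = p" using mod_pred_succ[OF \<open>p < m\<close>] by simp
      then have "(i + (b + 1)) mod m = (i + a) mod m" by (metis mod_add_succ p_def)
      then show ?thesis using add_mod_cancel_less[of "b + 1" m a i] assms(2,3) by simp
    qed
  next
    assume "a + 1 = b \<or> b + 1 = a"
    then show "E (c ((i + a) mod m)) (c ((i + b) mod m))" using succ edge_sym by blast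
  qed
qed

lemma cycle_arc_induces_path:
  assumes "is_cycle m c" "k < m"
  shows "induces_path E (cycle_arc m c k i) k"
  unfolding induces_path_def cycle_arc_def
proof (intro exI conjI allI impI)
  have inj: "inj_on c {0..<m}" and "0 < m" using assms(1) by (auto simp: is_cycle_def)
  show "bij_betw (\<lambda>j. c ((i + j) mod m)) {0..<k} ((\<lambda>j. c ((i + j) mod m)) ` {0..<k})"
  proof (rule inj_on_imp_bij_betw, rule inj_onI)
    fix a b assume "a \<in> {0..<k}" "b \<in> {0..<k}" "c ((i + a) mod m) = c ((i + b) mod m)"
    then show "a = b"
      using inj \<open>0 < m\<close> \<open>k < m\<close> add_mod_cancel_less[of a m b i] by (simp add: inj_on_eq_iff)
  qed
  fix a b assume "a < k" "b < k"
  then show "E (c ((i + a) mod m)) (c ((i + b) mod m)) \<longleftrightarrow> a + 1 = b \<or> b + 1 = a"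
    using cycle_arc_edge_iff[OF assms(1)] \<open>k < m\<close> by simp
qed

text \<open>An arc shorter than the cycle determines its first index: the predecessor of the first vertex
  lies outside the arc.\<close>
lemma cycle_arcs_distinct:
  assumes "is_cycle m c" "1 \<le> k" "k < m"
  shows "inj_on (cycle_arc m c k) {0..<m}"
proof (rule inj_onI)
  have m: "3 \<le> m" and inj: "inj_on c {0..<m}" using assms(1) by (auto simp: is_cycle_def)
  fix i i' assume i: "i \<in> {0..<m}" and i': "i' \<in> {0..<m}"
    and same: "cycle_arc m c k i = cycle_arc m c k i'"
  have "c ((i + 0) mod m) \<in> cycle_arc m c k i"
    using assms(2) unfolding cycle_arc_def by (intro imageI) auto
  then have "c i \<in> cycle_arc m c k i'" using i same by simp
  then obtain j where "j < k" and "c i = c ((i' + j) mod m)" by (auto simp: cycle_arc_def)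
  then have ij: "i = (i' + j) mod m" using inj i m by (simp add: inj_on_eq_iff)
  show "i = i'"
  proof (cases "j = 0")
    case True
    then show ?thesis using ij i' by simp
  next
    case False
    have "(i + (m - 1)) mod m = (i' + j + (m - 1)) mod m"
      unfolding ij by (rule mod_add_left_eq)
    also have "i' + j + (m - 1) = i' + (j - 1) + m" using False m by simp
    finally have "(i + (m - 1)) mod m = (i' + (j - 1)) mod m" by simp
    then have "c ((i + (m - 1)) mod m) \<in> cycle_arc m c k i'"
      using \<open>j < k\<close> unfolding cycle_arc_def by (intro image_eqI[of _ _ "j - 1"]) auto
    then have "c ((i + (m - 1)) mod m) \<in> cycle_arc m c k i" using same by simp
    then obtain j' where "j' < k" "c ((i + (m - 1)) mod m) = c ((i + j') mod m)"
      unfolding cycle_arc_def by auto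
    then have "(i + (m - 1)) mod m = (i + j') mod m" using inj m by (simp add: inj_on_eq_iff)
    then have "m - 1 = j'" using add_mod_cancel_less[of "m - 1" m j' i] \<open>j' < k\<close> assms(3) by simp
    then show ?thesis using \<open>j' < k\<close> assms(3) by simp
  qed
qed

lemma cycle_length_le:
  assumes "is_cycle m c" "1 \<le> k" "s_path V E k \<le> k"
  shows "m \<le> k"
proof (rule ccontr)
  assume "\<not> m \<le> k"
  then have "k < m" by simp
  have "cycle_arc m c k i \<subseteq> V" for i
    using assms(1) by (auto simp: cycle_arc_def is_cycle_def)
  then have "cycle_arc m c k ` {0..<m} \<subseteq> {X. X \<subseteq> V \<and> induces_path E X k}"
    using cycle_arc_induces_path[OF assms(1) \<open>k < m\<close>] by blast
  moreover have "finite {X. X \<subseteq> V \<and> induces_path E X k}"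
    using finite_V by (simp add: finite_subset[of _ "Pow V"])
  ultimately have "card (cycle_arc m c k ` {0..<m}) \<le> s_path V E k"
    unfolding s_path_def by (simp add: card_mono)
  moreover have "card (cycle_arc m c k ` {0..<m}) = m"
    using cycle_arcs_distinct[OF assms(1,2) \<open>k < m\<close>] by (simp add: card_image)
  ultimately show False using \<open>k < m\<close> assms(3) by simp
qed

text \<open>Such a copy would be the whole cycle, and then its end vertex would have two neighbours in it.\<close>
lemma no_induced_path_in_short_cycle:
  assumes cycle: "is_cycle m c" and "m \<le> k" and X: "induces_path E X k"
    and "X \<subseteq> c ` {0..<m}"
  shows False
proof -
  obtain f where f: "bij_betw f {0..<k} X"
    and f_edges: "\<And>i j. i < k \<Longrightarrow> j < k \<Longrightarrow> E (f i) (f j) \<longleftrightarrow> (i + 1 = j \<or> j + 1 = i)"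
    using X unfolding induces_path_def by blast
  have m: "3 \<le> m" and "card (c ` {0..<m}) = m"
    using cycle by (auto simp: is_cycle_def card_image)
  then have X_eq: "X = c ` {0..<m}"
    using card_induced_path[OF X] \<open>m \<le> k\<close> \<open>X \<subseteq> c ` {0..<m}\<close> by (simp add: card_seteq)
  have "0 < k" using m \<open>m \<le> k\<close> by simp
  then have "f 0 \<in> X" using f by (auto simp: bij_betw_def)
  then obtain p where "p < m" and p: "f 0 = c p" using X_eq by auto
  have "c ((p + 1) mod m) \<in> X" "c ((p + m - 1) mod m) \<in> X" using X_eq m by auto
  then obtain a b where ab: "a < k" "f a = c ((p + 1) mod m)" "b < k" "f b = c ((p + m - 1) mod m)"
    using f by (auto simp: bij_betw_def)
  have "E (f 0) (f a)" "E (f 0) (f b)" using cycle_edges[OF cycle \<open>p < m\<close>] p ab by auto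
  then have "a = 1" "b = 1" using f_edges[of 0 a] f_edges[of 0 b] \<open>0 < k\<close> ab by auto
  then show False using ab cycle_edges(3)[OF cycle \<open>p < m\<close>] by simp
qed

definition path_in :: "'a set \<Rightarrow> 'a list \<Rightarrow> bool" where
  "path_in D xs \<longleftrightarrow> distinct xs \<and> set xs \<subseteq> D \<and> (\<forall>i. Suc i < length xs \<longrightarrow> E (xs ! i) (xs ! Suc i))"

lemma path_in_rev:
  assumes "path_in D xs"
  shows "path_in D (rev xs)"
proof -
  have "E (rev xs ! i) (rev xs ! Suc i)" if "Suc i < length xs" for i
  proof -
    define j where "j = length xs - Suc (Suc i)"
    have "Suc j < length xs" using that by (simp add: j_def)
    then have "E (xs ! Suc j) (xs ! j)" using assms unfolding path_in_def by (blast intro: edge_sym)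
    moreover have "rev xs ! i = xs ! Suc j" "rev xs ! Suc i = xs ! j"
      using that by (simp_all add: rev_nth j_def Suc_diff_Suc)
    ultimately show ?thesis by simp
  qed
  then show ?thesis using assms by (simp add: path_in_def)
qed

end

section \<open>Components of a graph of maximum degree at most two\<close>

lemma rtranclp_closed:
  assumes "E\<^sup>*\<^sup>* a b" "a \<in> S" "\<And>x y. x \<in> S \<Longrightarrow> E x y \<Longrightarrow> y \<in> S"
  shows "b \<in> S"
  using assms(1,2) by induction (auto intro: assms(3))

lemma induced_path_in_component:
  assumes "X \<subseteq> V" "induces_path E X k" "1 \<le> k"
  shows "\<exists>D. component V E D \<and> X \<subseteq> D"
proof -
  obtain f where f: "bij_betw f {0..<k} X"
    and f_edges: "\<And>i j. i < k \<Longrightarrow> j < k \<Longrightarrow> E (f i) (f j) \<longleftrightarrow> (i + 1 = j \<or> j + 1 = i)"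
    using assms(2) unfolding induces_path_def by blast
  have f_X: "f j \<in> X" if "j < k" for j using f that by (auto simp: bij_betw_def)
  have reach: "E\<^sup>*\<^sup>* (f 0) (f j)" if "j < k" for j
    using that
  proof (induction j)
    case (Suc j)
    then have "E (f j) (f (Suc j))" using f_edges by simp
    with Suc show ?case by (meson Suc_lessD rtranclp.rtrancl_into_rtrancl)
  qed simp
  have "X \<subseteq> {v \<in> V. E\<^sup>*\<^sup>* (f 0) v}"
    using f reach \<open>X \<subseteq> V\<close> by (auto simp: bij_betw_def)
  moreover have "f 0 \<in> V" using f_X[of 0] \<open>1 \<le> k\<close> \<open>X \<subseteq> V\<close> by auto
  ultimately show ?thesis unfolding component_def by blast
qed

locale max_degree_le_2_component = max_degree_le_2 +
  fixes D :: "'a set"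
  assumes component: "component V E D"
begin

lemma D_subset_V: "D \<subseteq> V"
  using component by (auto simp: component_def)

lemma finite_D: "finite D"
  using finite_V D_subset_V by (rule finite_subset[rotated])

lemma D_nonempty: "D \<noteq> {}"
  using component by (auto simp: component_def)

lemma neighbour_in_D: "x \<in> D \<Longrightarrow> E x y \<Longrightarrow> y \<in> D"
  using component edge_in_V by (auto simp: component_def intro: rtranclp.rtrancl_into_rtrancl)

lemma D_connected:
  assumes "x \<in> D" "y \<in> D"
  shows "E\<^sup>*\<^sup>* x y"
proof -
  obtain u where D: "D = {v \<in> V. E\<^sup>*\<^sup>* u v}" using component by (auto simp: component_def)
  have "E\<^sup>*\<^sup>* u x" "E\<^sup>*\<^sup>* u y" using assms D by auto
  moreover have "symp E" by (rule sympI) (rule edge_sym)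
  ultimately show ?thesis by (meson rtranclp_trans sympD symp_rtranclp)
qed

lemma closed_subset_eq_D:
  assumes "S \<subseteq> D" "x \<in> S" "\<And>y z. y \<in> S \<Longrightarrow> E y z \<Longrightarrow> z \<in> S"
  shows "S = D"
  using assms D_connected rtranclp_closed[of E x _ S] by blast

definition cycle_component :: bool where
  "cycle_component \<longleftrightarrow> (\<exists>m c. is_cycle m c \<and> c ` {0..<m} = D)"

lemma cycle_spans_D:
  assumes cycle: "is_cycle m c" and "c ` {0..<m} \<subseteq> D"
  shows "c ` {0..<m} = D"
proof (rule closed_subset_eq_D)
  have "3 \<le> m" using cycle by (simp add: is_cycle_def)
  then show "c 0 \<in> c ` {0..<m}" by simp
  show "z \<in> c ` {0..<m}" if y: "y \<in> c ` {0..<m}" and yz: "E y z" for y z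
  proof -
    obtain p where "p < m" "y = c p" using y by auto
    then have "z = c ((p + 1) mod m) \<or> z = c ((p + m - 1) mod m)"
      using cycle_neighbour[OF cycle] yz by blast
    then show ?thesis using \<open>3 \<le> m\<close> by auto
  qed
qed fact

lemma chord_closes_cycle:
  assumes ys: "path_in D ys" and "2 \<le> j" "j < length ys" "E (ys ! 0) (ys ! j)"
  shows cycle_component
proof -
  have "(!) ys ` {0..<j + 1} \<subseteq> set ys" using \<open>j < length ys\<close> by auto
  then have in_D: "(!) ys ` {0..<j + 1} \<subseteq> D" using ys by (auto simp: path_in_def)
  have "is_cycle (j + 1) ((!) ys)"
    unfolding is_cycle_def
  proof (intro conjI allI impI)
    show "3 \<le> j + 1" using \<open>2 \<le> j\<close> by simp
    show "inj_on ((!) ys) {0..<j + 1}"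
      using ys \<open>j < length ys\<close> by (auto simp: path_in_def inj_on_def nth_eq_iff_index_eq)
    show "(!) ys ` {0..<j + 1} \<subseteq> V" using in_D D_subset_V by blast
    fix i assume "i < j + 1"
    show "E (ys ! i) (ys ! ((i + 1) mod (j + 1)))"
    proof (cases "i = j")
      case True
      then show ?thesis using edge_sym[OF assms(4)] by simp
    next
      case False
      then show ?thesis using \<open>i < j + 1\<close> ys \<open>j < length ys\<close> by (simp add: path_in_def)
    qed
  qed
  with in_D show ?thesis unfolding cycle_component_def using cycle_spans_D by blast
qed

definition longest_path :: "'a list \<Rightarrow> bool" where
  "longest_path xs \<longleftrightarrow> path_in D xs \<and> (\<forall>zs. path_in D zs \<longrightarrow> length zs \<le> length xs)"

lemma longest_path_exists: "\<exists>xs. longest_path xs \<and> xs \<noteq> []"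
proof -
  obtain u where "u \<in> D" using D_nonempty by blast
  then have "path_in D [u]" by (simp add: path_in_def)
  moreover have "length zs < card D + 1" if "path_in D zs" for zs
    using that finite_D by (auto simp: path_in_def distinct_card[symmetric] intro: card_mono le_imp_less_Suc)
  ultimately obtain xs where "path_in D xs" "\<forall>zs. path_in D zs \<longrightarrow> length zs \<le> length xs"
    using ex_has_greatest_nat[of "path_in D" "[u]" length "card D + 1"] by blast
  moreover have "xs \<noteq> []" using calculation \<open>path_in D [u]\<close> by fastforce
  ultimately show ?thesis unfolding longest_path_def by blast
qed

text \<open>Otherwise the path could be extended at its first vertex.\<close>
lemma longest_path_first_neighbour:
  assumes "longest_path ys" "ys \<noteq> []" "E (ys ! 0) w"
  shows "\<exists>j. 0 < j \<and> j < length ys \<and> w = ys ! j"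
proof -
  have ys: "path_in D ys" and longest: "\<And>zs. path_in D zs \<Longrightarrow> length zs \<le> length ys"
    using assms(1) by (auto simp: longest_path_def)
  have "ys ! 0 \<in> D" using ys assms(2) by (auto simp: path_in_def)
  then have "w \<in> D" using neighbour_in_D assms(3) by blast
  have "w \<in> set ys"
  proof (rule ccontr)
    assume "w \<notin> set ys"
    have "E ((w # ys) ! i) ((w # ys) ! Suc i)" if "Suc i < length (w # ys)" for i
      using that ys edge_sym[OF assms(3)] by (cases i) (auto simp: path_in_def)
    then have "path_in D (w # ys)"
      using ys \<open>w \<notin> set ys\<close> \<open>w \<in> D\<close> by (simp add: path_in_def)
    then show False using longest by fastforce
  qed
  then obtain j where "j < length ys" "w = ys ! j" by (metis in_set_conv_nth)
  moreover have "0 < j" using calculation assms(3) edge_irrefl[of "ys ! 0"] by (cases j) auto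
  ultimately show ?thesis by blast
qed

lemma longest_path_first_neighbour_eq:
  assumes "\<not> cycle_component" "longest_path ys" "ys \<noteq> []" "E (ys ! 0) w"
  shows "1 < length ys \<and> w = ys ! 1"
proof -
  obtain j where j: "0 < j" "j < length ys" "w = ys ! j"
    using longest_path_first_neighbour assms(2-4) by blast
  have "\<not> 2 \<le> j"
    using chord_closes_cycle[of ys j] assms j by (auto simp: longest_path_def)
  then have "j = 1" using \<open>0 < j\<close> by simp
  then show ?thesis using j by simp
qed

lemma longest_path_neighbour:
  assumes no_cycle: "\<not> cycle_component" and xs: "longest_path xs"
    and "i < length xs" "E (xs ! i) w"
  shows "\<exists>j<length xs. w = xs ! j \<and> (i + 1 = j \<or> j + 1 = i)"
proof -
  have "xs \<noteq> []" using \<open>i < length xs\<close> by auto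
  have dist: "distinct xs" and edges: "\<And>j. Suc j < length xs \<Longrightarrow> E (xs ! j) (xs ! Suc j)"
    using xs by (auto simp: longest_path_def path_in_def)
  consider "i = 0" | "i = length xs - 1" "i \<noteq> 0" | "0 < i" "i + 1 < length xs"
    using \<open>i < length xs\<close> by linarith
  then show ?thesis
  proof cases
    case 1
    then show ?thesis
      using longest_path_first_neighbour_eq[OF no_cycle xs \<open>xs \<noteq> []\<close>] assms(4) by auto
  next
    case 2
    have "longest_path (rev xs)" using xs path_in_rev by (simp add: longest_path_def)
    moreover have "rev xs ! 0 = xs ! i" using 2 \<open>xs \<noteq> []\<close> by (simp add: rev_nth)
    ultimately have "1 < length xs" "w = rev xs ! 1"
      using longest_path_first_neighbour_eq[OF no_cycle, of "rev xs" w] \<open>xs \<noteq> []\<close> assms(4)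
      by auto
    moreover have "rev xs ! 1 = xs ! (i - 1)" using 2 calculation(1) by (simp add: rev_nth)
    ultimately show ?thesis using 2 by (intro exI[of _ "i - 1"]) auto
  next
    case 3
    have "E (xs ! i) (xs ! (i + 1))" using edges 3 by simp
    moreover have "E (xs ! (i - 1)) (xs ! i)" using edges[of "i - 1"] 3 by simp
    then have "E (xs ! i) (xs ! (i - 1))" by (rule edge_sym)
    moreover have "xs ! (i + 1) \<noteq> xs ! (i - 1)" using dist 3 by (simp add: nth_eq_iff_index_eq)
    ultimately have "w = xs ! (i + 1) \<or> w = xs ! (i - 1)" using neighbour_cases assms(4) by blast
    then show ?thesis
    proof
      assume "w = xs ! (i + 1)"
      then show ?thesis using 3 by blast
    next
      assume "w = xs ! (i - 1)"
      then show ?thesis using 3 by (intro exI[of _ "i - 1"]) auto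
    qed
  qed
qed

lemma longest_path_edge_iff:
  assumes no_cycle: "\<not> cycle_component" and xs: "longest_path xs"
    and i: "i < length xs" and j: "j < length xs"
  shows "E (xs ! i) (xs ! j) \<longleftrightarrow> i + 1 = j \<or> j + 1 = i"
proof -
  have dist: "distinct xs" and edges: "\<And>j. Suc j < length xs \<Longrightarrow> E (xs ! j) (xs ! Suc j)"
    using xs by (auto simp: longest_path_def path_in_def)
  show ?thesis
  proof
    assume "E (xs ! i) (xs ! j)"
    then obtain j' where "j' < length xs" "xs ! j = xs ! j'" "i + 1 = j' \<or> j' + 1 = i"
      using longest_path_neighbour[OF no_cycle xs i] by blast
    then show "i + 1 = j \<or> j + 1 = i" using dist j by (simp add: nth_eq_iff_index_eq)
  next
    assume "i + 1 = j \<or> j + 1 = i"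
    then show "E (xs ! i) (xs ! j)"
    proof
      assume "i + 1 = j"
      then show ?thesis using edges[of i] j by auto
    next
      assume "j + 1 = i"
      then have "E (xs ! j) (xs ! i)" using edges i by auto
      then show ?thesis by (rule edge_sym)
    qed
  qed
qed

text \<open>If D is not a cycle, a longest path in D has no neighbours off it and no chords, so it is all
  of D and induces a path.\<close>
lemma path_or_cycle_component: "path_component V E D \<or> cycle_component"
proof (rule disjCI)
  assume no_cycle: "\<not> cycle_component"
  obtain xs where xs: "longest_path xs" and "xs \<noteq> []" using longest_path_exists by blast
  then have dist: "distinct xs" and "set xs \<subseteq> D" by (auto simp: longest_path_def path_in_def)
  have "set xs = D"
  proof (rule closed_subset_eq_D)
    show "xs ! 0 \<in> set xs" using \<open>xs \<noteq> []\<close> by simp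
    show "z \<in> set xs" if "y \<in> set xs" "E y z" for y z
      using that longest_path_neighbour[OF no_cycle xs] by (metis in_set_conv_nth)
  qed fact
  then have card_D: "card D = length xs" using distinct_card[OF dist] by simp
  have "induces_path E D (card D)"
    unfolding induces_path_def card_D
  proof (intro exI conjI allI impI)
    show "bij_betw ((!) xs) {0..<length xs} D"
      using bij_betw_nth[OF dist] \<open>set xs = D\<close> by (simp add: atLeast0LessThan)
    fix i j assume "i < length xs" "j < length xs"
    then show "E (xs ! i) (xs ! j) \<longleftrightarrow> (i + 1 = j \<or> j + 1 = i)"
      by (rule longest_path_edge_iff[OF no_cycle xs])
  qed
  then show "path_component V E D" using component by (simp add: path_component_def)
qed

end

context max_degree_le_2
begin

lemma induced_path_in_path_component:
  assumes "X \<subseteq> V" "induces_path E X k" "1 \<le> k" "s_path V E k \<le> k"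
  shows "\<exists>D. path_component V E D \<and> X \<subseteq> D"
proof -
  obtain D where D: "component V E D" "X \<subseteq> D"
    using induced_path_in_component assms(1-3) by blast
  interpret max_degree_le_2_component V E D by unfold_locales (rule D(1))
  from path_or_cycle_component show ?thesis
  proof
    assume "path_component V E D"
    then show ?thesis using D(2) by blast
  next
    assume cycle_component
    then obtain m c where cycle: "is_cycle m c" and "c ` {0..<m} = D"
      unfolding cycle_component_def by blast
    have "m \<le> k" using cycle_length_le[OF cycle assms(3,4)] .
    moreover have "X \<subseteq> c ` {0..<m}" using D(2) \<open>c ` {0..<m} = D\<close> by simp
    ultimately show ?thesis using no_induced_path_in_short_cycle[OF cycle _ assms(2)] by blast
  qed
qed

end

lemma max_degree_le_2_if_max_degree_le:
  assumes "simple_graph V E" "max_degree V E \<le> 2"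
  shows "max_degree_le_2 V E"
proof
  have "finite V" using assms(1) by (simp add: simple_graph_def)
  then show "degree V E v \<le> 2" if "v \<in> V" for v
    using that assms(2) by (auto simp: max_degree_def intro: le_trans[OF Max_ge])
qed fact

theorem lemma4p5:
  fixes V :: "'a set" and E :: "'a \<Rightarrow> 'a \<Rightarrow> bool" and k :: nat
  assumes "simple_graph V E"
    and "max_degree V E = 2"
    and "k \<ge> 1"
    and "\<exists>!C. path_component V E C \<and> card C \<ge> k - 1"
    and "s_path V E k \<le> k"
  shows "(\<forall>m. has_cycle_of_length V E m \<longrightarrow> m \<le> k) \<and>
         (\<forall>C. path_component V E C \<and> card C \<ge> k - 1 \<longrightarrow> card C = s_path V E k + k - 1)"
proof -
  interpret max_degree_le_2 V E
    by (rule max_degree_le_2_if_max_degree_le[OF assms(1)]) (simp add: assms(2))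
  have "m \<le> k" if "has_cycle_of_length V E m" for m
    using that cycle_length_le assms(3,5) by (auto simp: has_cycle_of_length_iff)
  moreover have "card C = s_path V E k + k - 1"
    if C: "path_component V E C" "k - 1 \<le> card C" for C
  proof -
    have "X \<subseteq> C" if X: "X \<subseteq> V" "induces_path E X k" for X
    proof -
      obtain D where D: "path_component V E D" "X \<subseteq> D"
        using induced_path_in_path_component X assms(3,5) by blast
      have "finite D" using D(1) finite_V by (auto simp: path_component_def component_def)
      then have "k \<le> card D" using card_mono[OF _ D(2)] card_induced_path[OF X(2)] by simp
      then have "D = C" using assms(4) C D(1) by (metis diff_le_self le_trans)
      with D(2) show ?thesis by simp
    qed
    then have "s_path V E k = card C + 1 - k" using s_path_path_component[OF C(1) assms(3)] by blast
    with C(2) assms(3) show ?thesis by simp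
  qed
  ultimately show ?thesis by blast
qed

end
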